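(* Let $H\le F_N$ be a nontrivial finitely generated subgroup. Then $\eta_H\in\mathcal S\mathrm{Curr}(F_N)$.
   Context: $\mathfrak C_N$ is the set of closed subsets of $\partial F_N$ with at least two points, with the Vietoris topology and the left translation action of $F_N$; $\mathcal S\mathrm{Curr}(F_N)$ is the set of positive $F_N$-invariant Borel measures on $\mathfrak C_N$ that are finite on compact subsets. The limit set $\Lambda(H)\subseteq\partial F_N$ is the set of limits of sequences of elements of $H$; $\mathrm{Comm}_{F_N}(H)=\{g\in F_N:[H:H\cap gHg^{-1}]<\infty,\ [gHg^{-1}:H\cap gHg^{-1}]<\infty\}$, which contains $H$ with finite index when $H$ is finitely generated and nontrivial. If $H=\mathrm{Comm}_{F_N}(H)$, $\eta_H:=\sum_{H_1\in[H]}\delta_{\Lambda(H_1)}$ with $[H]$ the conjugacy class of $H$; in general $\eta_H:=m\,\eta_{H_0}$ where $H_0=\mathrm{Comm}_{F_N}(H)$ and $m=[H_0:H]$. *)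

theory Defs
  imports "HOL-Analysis.Analysis" "HOL-Algebra.Algebra"
begin

type_synonym letter = "nat \<times> bool"   \<comment> \<open>(generator index, inverted?)\<close>

definition linv :: "letter \<Rightarrow> letter" where
  "linv a = (fst a, \<not> snd a)"

definition reduced :: "letter list \<Rightarrow> bool" where
  "reduced w \<longleftrightarrow> (\<forall>i. Suc i < length w \<longrightarrow> w ! Suc i \<noteq> linv (w ! i))"

definition red :: "letter list \<Rightarrow> letter list" where
  "red xs = foldr (\<lambda>a w. case w of [] \<Rightarrow> [a] | b # w' \<Rightarrow> (if b = linv a then w' else a # w)) xs []"

definition FN :: "nat \<Rightarrow> letter list monoid" where
  "FN N = \<lparr> carrier = {w. reduced w \<and> (\<forall>a\<in>set w. fst a < N)},
            mult = (\<lambda>x y. red (x @ y)), one = [] \<rparr>"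

definition Bd :: "nat \<Rightarrow> (nat \<Rightarrow> letter) set" where
  "Bd N = {\<xi>. (\<forall>i. fst (\<xi> i) < N) \<and> (\<forall>i. \<xi> (Suc i) \<noteq> linv (\<xi> i))}"

definition BdTop :: "nat \<Rightarrow> (nat \<Rightarrow> letter) topology" where
  "BdTop N = subtopology (product_topology (\<lambda>_. discrete_topology UNIV) UNIV) (Bd N)"

definition act :: "letter list \<Rightarrow> (nat \<Rightarrow> letter) \<Rightarrow> (nat \<Rightarrow> letter)" where
  "act g \<xi> = foldr (\<lambda>a \<zeta>. if \<zeta> 0 = linv a then (\<lambda>i. \<zeta> (Suc i)) else case_nat a \<zeta>) g \<xi>"

text \<open>Limit set: limits in F_N \<union> \<partial>F_N of sequences of elements of H
  (h_n \<rightarrow> \<xi> iff the common prefix of h_n and \<xi> becomes arbitrarily long).\<close>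
definition LimSet :: "nat \<Rightarrow> letter list set \<Rightarrow> (nat \<Rightarrow> letter) set" where
  "LimSet N H = {\<xi> \<in> Bd N. \<exists>hs. (\<forall>n. hs n \<in> H) \<and>
      (\<forall>k. eventually (\<lambda>n. k \<le> length (hs n) \<and> take k (hs n) = map \<xi> [0..<k]) sequentially)}"

definition CN :: "nat \<Rightarrow> (nat \<Rightarrow> letter) set set" where
  "CN N = {C. closedin (BdTop N) C \<and> (\<exists>x y. x \<in> C \<and> y \<in> C \<and> x \<noteq> y)}"

definition Vietoris :: "nat \<Rightarrow> (nat \<Rightarrow> letter) set topology" where
  "Vietoris N = subtopology
     (topology_generated_by
        ({{C. C \<subseteq> U} | U. openin (BdTop N) U} \<union> {{C. C \<inter> U \<noteq> {}} | U. openin (BdTop N) U}))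
     (CN N)"

definition BorelV :: "nat \<Rightarrow> (nat \<Rightarrow> letter) set set set" where
  "BorelV N = sigma_sets (CN N) {U. openin (Vietoris N) U}"

definition SCurr :: "nat \<Rightarrow> ((nat \<Rightarrow> letter) set set \<Rightarrow> ennreal) \<Rightarrow> bool" where
  "SCurr N \<mu> \<longleftrightarrow> measure_space (CN N) (BorelV N) \<mu>
     \<and> (\<forall>g \<in> carrier (FN N). \<forall>A \<in> BorelV N. \<mu> ((\<lambda>C. act g ` C) ` A) = \<mu> A)
     \<and> (\<forall>K. compactin (Vietoris N) K \<longrightarrow> \<mu> K < \<infinity>)"

definition conjg :: "('a, 'b) monoid_scheme \<Rightarrow> 'a \<Rightarrow> 'a set \<Rightarrow> 'a set" where
  "conjg G g H = (\<lambda>h. g \<otimes>\<^bsub>G\<^esub> h \<otimes>\<^bsub>G\<^esub> inv\<^bsub>G\<^esub> g) ` H"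

definition cosets_in :: "('a, 'b) monoid_scheme \<Rightarrow> 'a set \<Rightarrow> 'a set \<Rightarrow> 'a set set" where
  "cosets_in G K H = (\<lambda>h. K #>\<^bsub>G\<^esub> h) ` H"

definition Comm :: "('a, 'b) monoid_scheme \<Rightarrow> 'a set \<Rightarrow> 'a set" where
  "Comm G H = {g \<in> carrier G.
      finite (cosets_in G (H \<inter> conjg G g H) H) \<and>
      finite (cosets_in G (H \<inter> conjg G g H) (conjg G g H))}"

definition conjclass :: "('a, 'b) monoid_scheme \<Rightarrow> 'a set \<Rightarrow> 'a set set" where
  "conjclass G H = {conjg G g H | g. g \<in> carrier G}"

text \<open>\<eta>_H = m \<cdot> \<Sum>_{H_1 \<in> [H_0]} \<delta>_{\<Lambda>(H_1)}, H_0 = Comm(H), m = [H_0 : H].\<close>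
definition eta :: "nat \<Rightarrow> letter list set \<Rightarrow> (nat \<Rightarrow> letter) set set \<Rightarrow> ennreal" where
  "eta N H A = (let H0 = Comm (FN N) H in
     of_nat (card (cosets_in (FN N) H H0)) *
     emeasure (count_space (conjclass (FN N) H0)) {H1 \<in> conjclass (FN N) H0. LimSet N H1 \<in> A})"

end

theory Submission
  imports Defs
begin

text \<open>With \<open>H\<^sub>0 = Comm(H)\<close>, \<open>\<eta>\<^sub>H\<close> is \<open>[H\<^sub>0 : H]\<close> times the push-forward of the counting measure
  on the conjugacy class of \<open>H\<^sub>0\<close> under \<open>H\<^sub>1 \<mapsto> \<Lambda>(H\<^sub>1)\<close>, so it is a measure, and it is invariant
  because \<open>\<Lambda>(g H\<^sub>1 g\<^sup>-\<^sup>1) = g \<Lambda>(H\<^sub>1)\<close> and conjugation by \<open>g\<close> permutes the class.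

  The content is local finiteness. A compact set of \<open>\<frak>C\<^sub>N\<close> consists of sets containing two
  points that differ within their first \<open>m\<close> letters, for one \<open>m\<close>. If \<open>k \<Lambda>(H\<^sub>0)\<close> is such a set, the
  branch point of two of its points is \<open>k q\<close> with \<open>|k q| \<le> m\<close> and \<open>q\<close> a prefix of a point of
  \<open>\<Lambda>(H\<^sub>0)\<close>. The finitely generated \<open>H\<close> is quasiconvex and \<open>H\<^sub>0\<close> is a finite union of cosets
  \<open>H t\<close>, so \<open>q\<close> lies within a fixed distance \<open>D\<close> of some \<open>v \<in> H\<close>; since \<open>H\<close> normalises \<open>H\<^sub>0\<close>,
  \<open>k H\<^sub>0 k\<^sup>-\<^sup>1 = (k v) H\<^sub>0 (k v)\<^sup>-\<^sup>1\<close> with \<open>|k v| \<le> m + D\<close>, and there are finitely many such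
  words.\<close>

section \<open>Conjugation and the commensurator\<close>

context group
begin

lemma conjg_mult:
  assumes "a \<in> carrier G" "b \<in> carrier G" "Y \<subseteq> carrier G"
  shows "conjg G (a \<otimes> b) Y = conjg G a (conjg G b Y)"
proof -
  have "a \<otimes> b \<otimes> y \<otimes> inv (a \<otimes> b) = a \<otimes> (b \<otimes> y \<otimes> inv b) \<otimes> inv a" if "y \<in> carrier G" for y
    using that assms by (simp add: inv_mult_group m_assoc)
  then show ?thesis
    using assms unfolding conjg_def by (auto simp: image_image subset_iff intro!: image_cong)
qed

lemma conjg_one: "Y \<subseteq> carrier G \<Longrightarrow> conjg G \<one> Y = Y"
  unfolding conjg_def by (auto simp: subset_iff image_iff)

lemma conjg_inv_conjg: "a \<in> carrier G \<Longrightarrow> Y \<subseteq> carrier G \<Longrightarrow> conjg G (inv a) (conjg G a Y) = Y"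
  by (simp add: conjg_mult[symmetric] conjg_one)

lemma conjg_conjg_inv: "a \<in> carrier G \<Longrightarrow> Y \<subseteq> carrier G \<Longrightarrow> conjg G a (conjg G (inv a) Y) = Y"
  using conjg_inv_conjg[of "inv a" Y] by simp

lemma conjg_mono: "Y \<subseteq> Z \<Longrightarrow> conjg G a Y \<subseteq> conjg G a Z"
  by (auto simp: conjg_def)

lemma conjg_subgroup:
  assumes "subgroup H G" "h \<in> H"
  shows "conjg G h H = H"
proof -
  have sub: "conjg G x H \<subseteq> H" if "x \<in> H" for x
    using assms(1) that unfolding conjg_def by (auto intro: subgroup.m_closed subgroup.m_inv_closed)
  have "H = conjg G h (conjg G (inv h) H)"
    using assms by (simp add: conjg_conjg_inv subgroup.subset subgroup.mem_carrier)
  also have "\<dots> \<subseteq> conjg G h H"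
    using assms by (intro conjg_mono sub subgroup.m_inv_closed)
  finally show ?thesis
    using sub[OF assms(2)] by blast
qed

lemma conjg_Int:
  assumes "a \<in> carrier G" "Y \<subseteq> carrier G" "Z \<subseteq> carrier G"
  shows "conjg G a (Y \<inter> Z) = conjg G a Y \<inter> conjg G a Z"
proof -
  have "inj_on (\<lambda>x. a \<otimes> x \<otimes> inv a) (carrier G)"
    using assms(1) by (auto simp: inj_on_def)
  then show ?thesis
    unfolding conjg_def using assms by (auto simp: inj_on_def subset_iff)
qed

lemma conjg_rcos:
  assumes "a \<in> carrier G" "K \<subseteq> carrier G" "x \<in> carrier G"
  shows "conjg G a (K #> x) = conjg G a K #> (a \<otimes> x \<otimes> inv a)"
proof -
  have "a \<otimes> (k \<otimes> x) \<otimes> inv a = (a \<otimes> k \<otimes> inv a) \<otimes> (a \<otimes> x \<otimes> inv a)" if "k \<in> carrier G" for k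
    using that assms by (simp add: m_assoc inv_solve_left)
  then show ?thesis
    using assms unfolding conjg_def r_coset_def by (force simp: subset_iff)
qed

lemma cosets_in_conjg:
  assumes "a \<in> carrier G" "K \<subseteq> carrier G" "Y \<subseteq> carrier G"
  shows "cosets_in G (conjg G a K) (conjg G a Y) = conjg G a ` cosets_in G K Y"
  using assms unfolding cosets_in_def conjg_def[of G a Y]
  by (auto simp: image_image conjg_rcos subset_iff intro!: image_cong)

lemma Comm_subset: "Comm G H \<subseteq> carrier G"
  by (auto simp: Comm_def)

lemma Comm_conj_closed:
  assumes H: "subgroup H G" and h: "h \<in> H" and g: "g \<in> Comm G H"
  shows "h \<otimes> g \<otimes> inv h \<in> Comm G H"
proof -
  have hc: "h \<in> carrier G" and Hc: "H \<subseteq> carrier G"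
    using H h by (auto simp: subgroup.mem_carrier subgroup.subset)
  have gc: "g \<in> carrier G" and gH: "conjg G g H \<subseteq> carrier G"
    using g Hc by (auto simp: Comm_def conjg_def)
  have hH: "conjg G h H = H"
    using H h by (rule conjg_subgroup)
  have e: "conjg G (h \<otimes> g \<otimes> inv h) H = conjg G h (conjg G g H)"
    using hc gc Hc conjg_subgroup[OF H subgroup.m_inv_closed[OF H h]] by (simp add: conjg_mult)
  have i: "H \<inter> conjg G h (conjg G g H) = conjg G h (H \<inter> conjg G g H)"
    using hc Hc gH hH by (simp add: conjg_Int)
  have cos: "cosets_in G (conjg G h (H \<inter> conjg G g H)) (conjg G h Y)
      = conjg G h ` cosets_in G (H \<inter> conjg G g H) Y" if "Y \<subseteq> carrier G" for Y
    using hc Hc that by (intro cosets_in_conjg) auto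
  show ?thesis
    using g hc gc cos[OF Hc] cos[OF gH]
    unfolding Comm_def mem_Collect_eq e i hH by auto
qed

lemma conjg_Comm:
  assumes "subgroup H G" "h \<in> H"
  shows "conjg G h (Comm G H) = Comm G H"
proof -
  have sub: "conjg G x (Comm G H) \<subseteq> Comm G H" if "x \<in> H" for x
    unfolding conjg_def using Comm_conj_closed[OF assms(1) that] by auto
  have "Comm G H = conjg G h (conjg G (inv h) (Comm G H))"
    using assms by (simp add: conjg_conjg_inv subgroup.mem_carrier Comm_subset)
  also have "\<dots> \<subseteq> conjg G h (Comm G H)"
    using assms by (intro conjg_mono sub subgroup.m_inv_closed)
  finally show ?thesis
    using sub[OF assms(2)] by blast
qed

lemma conjclass_subset: "Y \<subseteq> carrier G \<Longrightarrow> Z \<in> conjclass G Y \<Longrightarrow> Z \<subseteq> carrier G"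
  by (auto simp: conjclass_def conjg_def)

lemma conjg_in_conjclass:
  "a \<in> carrier G \<Longrightarrow> Y \<subseteq> carrier G \<Longrightarrow> Z \<in> conjclass G Y \<Longrightarrow> conjg G a Z \<in> conjclass G Y"
  by (auto simp: conjclass_def conjg_mult[symmetric])

lemma finite_cosets_in_representatives:
  assumes "subgroup H G" "Y \<subseteq> carrier G" "finite (cosets_in G H Y)"
  obtains T where "finite T" "T \<subseteq> Y" "\<And>y. y \<in> Y \<Longrightarrow> \<exists>t\<in>T. \<exists>h\<in>H. y = h \<otimes> t"
proof -
  obtain T where T: "T \<subseteq> Y" "finite T" "cosets_in G H Y = (\<lambda>t. H #> t) ` T"
    using finite_subset_image[OF assms(3), of "\<lambda>t. H #> t" Y] by (auto simp: cosets_in_def)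
  have "\<exists>t\<in>T. \<exists>h\<in>H. y = h \<otimes> t" if "y \<in> Y" for y
  proof -
    have "H #> y \<in> cosets_in G H Y"
      using that by (simp add: cosets_in_def)
    then obtain t where "t \<in> T" "H #> y = H #> t"
      using T(3) by auto
    moreover have "y \<in> H #> y"
      using assms that by (auto intro: rcos_self)
    ultimately show ?thesis
      unfolding r_coset_def by auto
  qed
  with T that show ?thesis by blast
qed

end

section \<open>Reduced words\<close>

definition red_cons :: "letter \<Rightarrow> letter list \<Rightarrow> letter list" where
  "red_cons = (\<lambda>a w. case w of [] \<Rightarrow> [a] | b # w' \<Rightarrow> (if b = linv a then w' else a # w))"

definition inv_word :: "letter list \<Rightarrow> letter list" where
  "inv_word w = rev (map linv w)"

lemma linv_linv [simp]: "linv (linv a) = a"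
  by (simp add: linv_def)

lemma fst_linv [simp]: "fst (linv a) = fst a"
  by (simp add: linv_def)

lemma red_cons_Nil [simp]: "red_cons a [] = [a]"
  by (simp add: red_cons_def)

lemma red_cons_Cons [simp]: "red_cons a (b # w) = (if b = linv a then w else a # b # w)"
  by (simp add: red_cons_def)

lemma red_eq_foldr: "red xs = foldr red_cons xs []"
  by (simp add: red_def red_cons_def)

lemma red_Nil [simp]: "red [] = []"
  by (simp add: red_eq_foldr)

lemma red_Cons: "red (a # xs) = red_cons a (red xs)"
  by (simp add: red_eq_foldr)

lemma red_append: "red (xs @ ys) = foldr red_cons xs (red ys)"
  by (simp add: red_eq_foldr)

lemma reduced_Nil [simp]: "reduced []"
  by (simp add: reduced_def)

lemma reduced_Cons: "reduced (a # w) \<longleftrightarrow> reduced w \<and> (w \<noteq> [] \<longrightarrow> hd w \<noteq> linv a)"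
  by (cases w) (auto simp: reduced_def nth_Cons split: nat.splits)

lemma reduced_red_cons: "reduced w \<Longrightarrow> reduced (red_cons a w)"
  by (cases w) (auto simp: reduced_Cons)

lemma reduced_foldr_red_cons: "reduced w \<Longrightarrow> reduced (foldr red_cons xs w)"
  by (induction xs) (auto intro: reduced_red_cons)

lemma reduced_red [simp]: "reduced (red xs)"
  by (simp add: red_eq_foldr reduced_foldr_red_cons)

lemma red_reduced: "reduced w \<Longrightarrow> red w = w"
proof (induction w)
  case (Cons a w)
  then have "reduced w" by (simp add: reduced_Cons)
  with Cons show ?case by (cases w) (auto simp: red_Cons reduced_Cons)
qed simp

lemma red_cons_linv: "reduced u \<Longrightarrow> red_cons a (red_cons (linv a) u) = u"
  by (cases u; cases "tl u") (auto simp: reduced_Cons)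

lemma foldr_red_cons_red_cons:
  assumes "reduced w"
  shows "foldr red_cons (red_cons a u) w = red_cons a (foldr red_cons u w)"
proof (cases u)
  case (Cons b u')
  show ?thesis
  proof (cases "b = linv a")
    case True
    then have "foldr red_cons u w = red_cons (linv a) (foldr red_cons u' w)"
      using Cons by simp
    then show ?thesis
      using Cons True red_cons_linv[OF reduced_foldr_red_cons[OF assms]] by simp
  qed (use Cons in simp)
qed simp

lemma foldr_red: "reduced w \<Longrightarrow> foldr red_cons (red xs) w = foldr red_cons xs w"
  by (induction xs) (simp_all add: red_Cons foldr_red_cons_red_cons)

lemma red_red_left: "red (red xs @ ys) = red (xs @ ys)"
  by (simp add: red_append foldr_red)

lemma red_red_right: "red (xs @ red ys) = red (xs @ ys)"
  by (simp add: red_append red_reduced)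

lemma inv_word_Nil [simp]: "inv_word [] = []"
  by (simp add: inv_word_def)

lemma inv_word_Cons: "inv_word (a # w) = inv_word w @ [linv a]"
  by (simp add: inv_word_def)

lemma inv_word_append: "inv_word (xs @ ys) = inv_word ys @ inv_word xs"
  by (simp add: inv_word_def)

lemma inv_word_inv_word [simp]: "inv_word (inv_word w) = w"
  by (simp add: inv_word_def rev_map comp_def)

lemma length_inv_word [simp]: "length (inv_word w) = length w"
  by (simp add: inv_word_def)

lemma set_inv_word: "set (inv_word w) = linv ` set w"
  by (simp add: inv_word_def)

lemma reduced_inv_word:
  assumes "reduced w"
  shows "reduced (inv_word w)"
  unfolding reduced_def
proof (intro allI impI)
  fix i assume i: "Suc i < length (inv_word w)"
  define j where "j = length w - Suc (Suc i)"
  have "w ! Suc j \<noteq> linv (w ! j)"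
    using assms i by (auto simp: reduced_def j_def)
  moreover have "inv_word w ! Suc i = linv (w ! j)" "inv_word w ! i = linv (w ! Suc j)"
    using i by (simp_all add: inv_word_def rev_nth j_def Suc_diff_Suc)
  ultimately show "inv_word w ! Suc i \<noteq> linv (inv_word w ! i)"
    by auto
qed

lemma foldr_red_cons_cancel: "reduced u \<Longrightarrow> foldr red_cons (w @ inv_word w) u = u"
proof (induction w arbitrary: u)
  case (Cons a w)
  then have "foldr red_cons (w @ inv_word w) (red_cons (linv a) u) = red_cons (linv a) u"
    by (simp add: reduced_red_cons)
  then show ?case
    using red_cons_linv[OF Cons.prems, of a] by (simp add: inv_word_Cons)
qed simp

lemma red_cancel_middle: "red (xs @ w @ inv_word w @ ys) = red (xs @ ys)"
  by (simp add: red_append foldr_red_cons_cancel[of "red ys" w, simplified])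

lemma red_cancel_middle': "red (xs @ inv_word w @ w @ ys) = red (xs @ ys)"
  using red_cancel_middle[of xs "inv_word w" ys] by simp

lemma red_inv_word_red: "red (inv_word (red w) @ v) = red (inv_word w @ v)"
proof -
  have "red (inv_word w @ v) = red (inv_word (red w) @ red w @ inv_word w @ v)"
    using red_cancel_middle'[of "[]" "red w" "inv_word w @ v"] by simp
  also have "\<dots> = red (inv_word (red w) @ w @ inv_word w @ v)"
    by (simp only: red_append[of "inv_word (red w)"] red_red_left)
  also have "\<dots> = red (inv_word (red w) @ v)"
    by (rule red_cancel_middle)
  finally show ?thesis ..
qed

lemma reduced_take: "reduced w \<Longrightarrow> reduced (take n w)"
  by (simp add: reduced_def)

lemma length_red_cons: "length (red_cons a w) \<le> Suc (length w)"
  by (cases w) auto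

lemma length_red: "length (red xs) \<le> length xs"
  by (induction xs) (auto simp: red_Cons intro: le_trans[OF length_red_cons])

lemma length_red_append: "length (red (xs @ ys)) \<le> length (red xs) + length (red ys)"
  using length_red[of "red xs @ red ys"] by (simp add: red_red_left red_red_right)

lemma set_red: "set (red xs) \<subseteq> set xs"
proof (induction xs)
  case (Cons a xs)
  then show ?case
    by (cases "red xs") (auto simp: red_Cons)
qed simp

lemma red_append_cancellation:
  assumes "reduced x" "reduced y"
  shows "\<exists>j. j \<le> length x \<and> j \<le> length y \<and> drop (length x - j) x = inv_word (take j y)
          \<and> red (x @ y) = take (length x - j) x @ drop j y"
  using assms(1)
proof (induction x)
  case Nil
  show ?case using red_reduced[OF assms(2)] by (intro exI[of _ 0]) simp
next
  case (Cons a x)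
  have rx: "reduced x" and hx: "x \<noteq> [] \<Longrightarrow> hd x \<noteq> linv a"
    using Cons.prems by (auto simp: reduced_Cons)
  obtain j where j: "j \<le> length x" "j \<le> length y" "drop (length x - j) x = inv_word (take j y)"
     "red (x @ y) = take (length x - j) x @ drop j y"
    using Cons.IH[OF rx] by blast
  have r: "red ((a # x) @ y) = red_cons a (take (length x - j) x @ drop j y)"
    using j(4) by (simp add: red_Cons)
  have sj: "length (a # x) - j = Suc (length x - j)"
    using j(1) by simp
  consider (partial) "j < length x" | (full_keep) "j = length x" "drop j y = [] \<or> hd (drop j y) \<noteq> linv a"
    | (full_cancel) "j = length x" "drop j y \<noteq> []" "hd (drop j y) = linv a"
    using j(1) by force
  then show ?case
  proof cases
    case partial
    then obtain cs where cs: "take (length x - j) x = hd x # cs" and "x \<noteq> []"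
      by (cases x) (auto simp: Suc_diff_le)
    then have "red ((a # x) @ y) = take (length (a # x) - j) (a # x) @ drop j y"
      using r sj hx by simp
    then show ?thesis
      using j sj by (intro exI[of _ j]) auto
  next
    case full_keep
    then have "red ((a # x) @ y) = take (length (a # x) - j) (a # x) @ drop j y"
      using r by (cases "drop j y") auto
    then show ?thesis
      using j full_keep by (intro exI[of _ j]) auto
  next
    case full_cancel
    then have jy: "j < length y"
      by simp
    then have dj: "drop j y = linv a # drop (Suc j) y"
      using full_cancel by (metis Cons_nth_drop_Suc hd_drop_conv_nth)
    then have "red ((a # x) @ y) = drop (Suc j) y"
      using r full_cancel by simp
    moreover have "inv_word (take (Suc j) y) = a # x"
      using j(3) full_cancel jy dj
      by (simp add: take_Suc_conv_app_nth inv_word_append inv_word_def nth_via_drop)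
    ultimately show ?thesis
      using jy full_cancel by (intro exI[of _ "Suc j"]) simp
  qed
qed

lemma carrier_FN: "w \<in> carrier (FN N) \<longleftrightarrow> reduced w \<and> (\<forall>a\<in>set w. fst a < N)"
  by (simp add: FN_def)

lemma mult_FN: "x \<otimes>\<^bsub>FN N\<^esub> y = red (x @ y)"
  by (simp add: FN_def)

lemma one_FN: "\<one>\<^bsub>FN N\<^esub> = []"
  by (simp add: FN_def)

lemma red_in_carrier_FN: "\<forall>a\<in>set xs. fst a < N \<Longrightarrow> red xs \<in> carrier (FN N)"
  using set_red[of xs] by (auto simp: carrier_FN)

lemma inv_word_in_carrier_FN: "w \<in> carrier (FN N) \<Longrightarrow> inv_word w \<in> carrier (FN N)"
  by (auto simp: carrier_FN reduced_inv_word set_inv_word)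

lemma group_FN: "group (FN N)"
proof (rule groupI)
  fix x y assume "x \<in> carrier (FN N)" "y \<in> carrier (FN N)"
  then show "x \<otimes>\<^bsub>FN N\<^esub> y \<in> carrier (FN N)"
    unfolding mult_FN by (intro red_in_carrier_FN) (auto simp: carrier_FN)
next
  fix x y z
  show "x \<otimes>\<^bsub>FN N\<^esub> y \<otimes>\<^bsub>FN N\<^esub> z = x \<otimes>\<^bsub>FN N\<^esub> (y \<otimes>\<^bsub>FN N\<^esub> z)"
    by (simp add: mult_FN red_red_left red_red_right)
next
  fix x assume x: "x \<in> carrier (FN N)"
  then show "\<one>\<^bsub>FN N\<^esub> \<otimes>\<^bsub>FN N\<^esub> x = x"
    by (simp add: one_FN mult_FN carrier_FN red_reduced)
  show "\<exists>y\<in>carrier (FN N). y \<otimes>\<^bsub>FN N\<^esub> x = \<one>\<^bsub>FN N\<^esub>"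
    using inv_word_in_carrier_FN[OF x] red_cancel_middle'[of "[]" x "[]"]
    by (intro bexI[of _ "inv_word x"]) (simp_all add: mult_FN one_FN)
qed (simp add: one_FN carrier_FN)

lemma inv_FN: "w \<in> carrier (FN N) \<Longrightarrow> inv\<^bsub>FN N\<^esub> w = inv_word w"
  using red_cancel_middle'[of "[]" w "[]"]
  by (intro group.inv_equality[OF group_FN]) (simp_all add: mult_FN one_FN inv_word_in_carrier_FN)

lemma conjg_FN:
  assumes "g \<in> carrier (FN N)" "Y \<subseteq> carrier (FN N)"
  shows "conjg (FN N) g Y = (\<lambda>h. red (g @ h @ inv_word g)) ` Y"
  using assms unfolding conjg_def
  by (auto simp: inv_FN mult_FN red_red_left subset_iff intro!: image_cong)

lemma finite_FN_ball: "finite {w \<in> carrier (FN N). length w \<le> R}"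
proof -
  have "finite {a :: letter. fst a < N}"
    by (rule finite_subset[of _ "{..<N} \<times> UNIV"]) auto
  then have "finite {xs. set xs \<subseteq> {a :: letter. fst a < N} \<and> length xs \<le> R}"
    by (rule finite_lists_length_le)
  then show ?thesis
    by (rule rev_finite_subset) (auto simp: carrier_FN)
qed

section \<open>The action on the boundary\<close>

definition act_letter :: "letter \<Rightarrow> (nat \<Rightarrow> letter) \<Rightarrow> (nat \<Rightarrow> letter)" where
  "act_letter = (\<lambda>a \<zeta>. if \<zeta> 0 = linv a then (\<lambda>i. \<zeta> (Suc i)) else case_nat a \<zeta>)"

definition reduced_inf :: "(nat \<Rightarrow> letter) \<Rightarrow> bool" where
  "reduced_inf \<zeta> \<longleftrightarrow> (\<forall>i. \<zeta> (Suc i) \<noteq> linv (\<zeta> i))"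

definition prepend :: "letter list \<Rightarrow> (nat \<Rightarrow> letter) \<Rightarrow> (nat \<Rightarrow> letter)" where
  "prepend q \<alpha> = (\<lambda>i. if i < length q then q ! i else \<alpha> (i - length q))"

lemma act_Nil [simp]: "act [] \<xi> = \<xi>"
  by (simp add: act_def)

lemma act_Cons: "act (a # g) \<xi> = act_letter a (act g \<xi>)"
  by (simp add: act_def act_letter_def)

lemma act_append: "act (xs @ ys) \<xi> = act xs (act ys \<xi>)"
  by (simp add: act_def)

lemma act_letter_cancel: "\<zeta> 0 = linv a \<Longrightarrow> act_letter a \<zeta> = (\<lambda>i. \<zeta> (Suc i))"
  by (simp add: act_letter_def)

lemma act_letter_prepend: "\<zeta> 0 \<noteq> linv a \<Longrightarrow> act_letter a \<zeta> = case_nat a \<zeta>"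
  by (simp add: act_letter_def)

lemma reduced_inf_case_nat: "reduced_inf (case_nat a \<zeta>) \<longleftrightarrow> reduced_inf \<zeta> \<and> \<zeta> 0 \<noteq> linv a"
  unfolding reduced_inf_def by (metis nat.simps(4,5) old.nat.exhaust)

lemma reduced_inf_shift: "reduced_inf \<zeta> \<Longrightarrow> reduced_inf (\<lambda>i. \<zeta> (Suc i))"
  by (simp add: reduced_inf_def)

lemma reduced_inf_act_letter: "reduced_inf \<zeta> \<Longrightarrow> reduced_inf (act_letter a \<zeta>)"
  by (cases "\<zeta> 0 = linv a")
    (auto simp: act_letter_cancel act_letter_prepend reduced_inf_shift reduced_inf_case_nat)

lemma reduced_inf_act: "reduced_inf \<zeta> \<Longrightarrow> reduced_inf (act g \<zeta>)"
  by (induction g) (auto simp: act_Cons reduced_inf_act_letter)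

lemma act_letter_linv:
  assumes "reduced_inf \<zeta>"
  shows "act_letter a (act_letter (linv a) \<zeta>) = \<zeta>"
proof (cases "\<zeta> 0 = a")
  case True
  then have "\<zeta> (Suc 0) \<noteq> linv a"
    using assms unfolding reduced_inf_def by auto
  with True show ?thesis
    by (auto simp: act_letter_cancel act_letter_prepend fun_eq_iff split: nat.splits)
qed (simp add: act_letter_cancel act_letter_prepend)

lemma act_red_cons:
  assumes "reduced_inf \<zeta>"
  shows "act (red_cons a u) \<zeta> = act_letter a (act u \<zeta>)"
proof (cases u)
  case (Cons b u')
  then show ?thesis
    using act_letter_linv[OF reduced_inf_act[OF assms, of u'], of a] by (simp add: act_Cons)
qed (simp add: act_Cons)

lemma act_red: "reduced_inf \<zeta> \<Longrightarrow> act (red xs) \<zeta> = act xs \<zeta>"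
  by (induction xs) (simp_all add: red_Cons act_red_cons act_Cons)

lemma act_inv_word_act: "reduced_inf \<zeta> \<Longrightarrow> act (inv_word g) (act g \<zeta>) = \<zeta>"
  using act_red[of \<zeta> "inv_word g @ g"] red_cancel_middle'[of "[]" g "[]"] by (simp add: act_append)

lemma Bd_iff: "\<xi> \<in> Bd N \<longleftrightarrow> reduced_inf \<xi> \<and> (\<forall>i. fst (\<xi> i) < N)"
  by (auto simp: Bd_def reduced_inf_def)

lemma act_in_Bd:
  assumes "g \<in> carrier (FN N)" "\<xi> \<in> Bd N"
  shows "act g \<xi> \<in> Bd N"
proof -
  have "\<forall>a\<in>set g. fst a < N"
    using assms(1) by (simp add: carrier_FN)
  then have "\<forall>i. fst (act g \<xi> i) < N"
    using assms(2) by (induction g) (auto simp: Bd_iff act_Cons act_letter_def split: nat.splits)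
  then show ?thesis
    using assms(2) by (simp add: Bd_iff reduced_inf_act)
qed

lemma image_act_inv_word_act: "C \<subseteq> Bd N \<Longrightarrow> act (inv_word g) ` act g ` C = C"
  by (force simp: image_image Bd_iff act_inv_word_act)

lemma image_act_act_inv_word: "C \<subseteq> Bd N \<Longrightarrow> act g ` act (inv_word g) ` C = C"
  using image_act_inv_word_act[of C N "inv_word g"] by simp

lemma prepend_Nil [simp]: "prepend [] \<alpha> = \<alpha>"
  by (simp add: prepend_def)

lemma prepend_Cons: "prepend (a # q) \<alpha> = case_nat a (prepend q \<alpha>)"
  by (auto simp: prepend_def fun_eq_iff split: nat.splits)

lemma map_prepend: "map (prepend q \<alpha>) [0..<length q] = q"
  by (rule nth_equalityI) (auto simp: prepend_def)

lemma act_prepend: "reduced_inf (prepend q \<alpha>) \<Longrightarrow> act q \<alpha> = prepend q \<alpha>"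
proof (induction q)
  case (Cons a q)
  then have "reduced_inf (prepend q \<alpha>)" "prepend q \<alpha> 0 \<noteq> linv a"
    by (auto simp: prepend_Cons reduced_inf_case_nat)
  with Cons.IH show ?case
    by (simp add: act_Cons act_letter_prepend prepend_Cons)
qed simp

lemma reduced_inf_prepend:
  "reduced q \<Longrightarrow> reduced_inf \<alpha> \<Longrightarrow> (q \<noteq> [] \<longrightarrow> \<alpha> 0 \<noteq> linv (last q)) \<Longrightarrow> reduced_inf (prepend q \<alpha>)"
proof (induction q)
  case (Cons a q)
  then have "reduced_inf (prepend q \<alpha>)"
    by (cases q) (auto simp: reduced_Cons)
  moreover have "prepend q \<alpha> 0 \<noteq> linv a"
    using Cons.prems by (cases q) (auto simp: reduced_Cons prepend_def)
  ultimately show ?case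
    by (simp add: prepend_Cons reduced_inf_case_nat)
qed simp

lemma reduced_map_prefix: "reduced_inf \<zeta> \<Longrightarrow> reduced (map \<zeta> [0..<d])"
  unfolding reduced_def reduced_inf_def by simp

definition agrees :: "letter list \<Rightarrow> (nat \<Rightarrow> letter) \<Rightarrow> nat \<Rightarrow> bool" where
  "agrees w \<xi> k \<longleftrightarrow> k \<le> length w \<and> (\<forall>i<k. w ! i = \<xi> i)"

lemma agrees_iff_take: "agrees w \<xi> k \<longleftrightarrow> k \<le> length w \<and> take k w = map \<xi> [0..<k]"
  by (auto simp: agrees_def list_eq_iff_nth_eq)

lemma agrees_act:
  "agrees w \<xi> (k + length g) \<Longrightarrow> agrees (foldr red_cons g w) (act g \<xi>) k"
proof (induction g arbitrary: k)
  case (Cons a g)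
  then have ag: "agrees (foldr red_cons g w) (act g \<xi>) (Suc k)"
    by simp
  then obtain u where u: "foldr red_cons g w = act g \<xi> 0 # u"
    by (cases "foldr red_cons g w") (auto simp: agrees_def)
  show ?case
    using ag u
    by (cases "act g \<xi> 0 = linv a")
      (auto simp: act_Cons act_letter_cancel act_letter_prepend agrees_def nth_Cons split: nat.splits)
qed simp

lemma agrees_red_append:
  assumes "reduced w" "agrees w \<xi> (k + length v)"
  shows "agrees (red (w @ v)) \<xi> k"
proof -
  obtain j where j: "j \<le> length (red v)" "red (w @ red v) = take (length w - j) w @ drop j (red v)"
    using red_append_cancellation[OF assms(1) reduced_red[of v]] by blast
  moreover have "k \<le> length w - j"
    using j(1) length_red[of v] assms(2) by (auto simp: agrees_def)
  ultimately show ?thesis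
    using assms(2) by (auto simp: agrees_def nth_append red_red_right)
qed

lemma eventually_agrees_conj:
  assumes "\<forall>n. reduced (hs n)" "\<forall>k. eventually (\<lambda>n. agrees (hs n) \<xi> k) sequentially"
  shows "eventually (\<lambda>n. agrees (red (g @ hs n @ inv_word g)) (act g \<xi>) k) sequentially"
  using assms(2)[rule_format, of "k + length g + length (inv_word g)"]
proof (rule eventually_mono)
  fix n assume "agrees (hs n) \<xi> (k + length g + length (inv_word g))"
  then have "agrees (red (hs n @ inv_word g)) \<xi> (k + length g)"
    using agrees_red_append assms(1) by blast
  then show "agrees (red (g @ hs n @ inv_word g)) (act g \<xi>) k"
    by (auto simp: red_append dest: agrees_act)
qed

lemma LimSet_iff: "\<xi> \<in> LimSet N Y \<longleftrightarrow> \<xi> \<in> Bd N \<and> (\<exists>hs. (\<forall>n. hs n \<in> Y) \<and>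
   (\<forall>k. eventually (\<lambda>n. agrees (hs n) \<xi> k) sequentially))"
  by (simp add: LimSet_def agrees_iff_take)

lemma LimSet_subset_Bd: "LimSet N Y \<subseteq> Bd N"
  by (auto simp: LimSet_def)

lemma act_LimSet_subset_LimSet_conjg:
  assumes g: "g \<in> carrier (FN N)" and Y: "Y \<subseteq> carrier (FN N)"
  shows "act g ` LimSet N Y \<subseteq> LimSet N (conjg (FN N) g Y)"
proof
  fix \<zeta> assume "\<zeta> \<in> act g ` LimSet N Y"
  then obtain \<xi> hs where z: "\<zeta> = act g \<xi>" "\<xi> \<in> Bd N" and hs: "\<forall>n. hs n \<in> Y"
    "\<forall>k. eventually (\<lambda>n. agrees (hs n) \<xi> k) sequentially"
    by (auto simp: LimSet_iff)
  have "\<forall>n. reduced (hs n)"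
    using hs(1) Y by (auto simp: carrier_FN)
  from eventually_agrees_conj[OF this hs(2)] show "\<zeta> \<in> LimSet N (conjg (FN N) g Y)"
    unfolding LimSet_iff conjg_FN[OF g Y] using hs(1) z act_in_Bd[OF g]
    by (intro conjI exI[of _ "\<lambda>n. red (g @ hs n @ inv_word g)"]) auto
qed

lemma LimSet_conjg:
  assumes g: "g \<in> carrier (FN N)" and Y: "Y \<subseteq> carrier (FN N)"
  shows "LimSet N (conjg (FN N) g Y) = act g ` LimSet N Y"
proof
  show "act g ` LimSet N Y \<subseteq> LimSet N (conjg (FN N) g Y)"
    using g Y by (rule act_LimSet_subset_LimSet_conjg)
next
  interpret group "FN N" by (rule group_FN)
  have g': "inv_word g \<in> carrier (FN N)"
    using g by (rule inv_word_in_carrier_FN)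
  have "conjg (FN N) g Y \<subseteq> carrier (FN N)"
    using g Y by (auto simp: conjg_def)
  then have "act (inv_word g) ` LimSet N (conjg (FN N) g Y)
      \<subseteq> LimSet N (conjg (FN N) (inv_word g) (conjg (FN N) g Y))"
    by (rule act_LimSet_subset_LimSet_conjg[OF g'])
  also have "conjg (FN N) (inv_word g) (conjg (FN N) g Y) = Y"
    using g Y by (simp add: inv_FN[symmetric] conjg_inv_conjg)
  finally show "LimSet N (conjg (FN N) g Y) \<subseteq> act g ` LimSet N Y"
    using image_act_act_inv_word[of "LimSet N (conjg (FN N) g Y)" N g] LimSet_subset_Bd by blast
qed

section \<open>Branch points\<close>

lemma act_eq_prepend_imp:
  assumes "act k \<zeta> = prepend P \<gamma>" "reduced_inf \<zeta>" "reduced_inf \<gamma>"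
  shows "\<zeta> = act (red (inv_word k @ P)) \<gamma>"
proof -
  have "\<zeta> = act (inv_word k) (act P \<gamma>)"
    using assms act_inv_word_act[of \<zeta> k] act_prepend[of P \<gamma>] reduced_inf_act[of \<zeta> k] by simp
  then show ?thesis
    using act_red[OF assms(3), of "inv_word k @ P"] by (simp add: act_append)
qed

lemma branch_point:
  assumes k: "reduced k" and \<xi>: "reduced_inf \<xi>" and \<eta>: "reduced_inf \<eta>"
    and d: "\<forall>i<d. act k \<xi> i = act k \<eta> i" "act k \<xi> d \<noteq> act k \<eta> d"
  shows "\<exists>\<zeta>\<in>{\<xi>, \<eta>}. \<exists>i. red (k @ map \<zeta> [0..<i]) = map (act k \<xi>) [0..<d]"
proof -
  define P where "P = map (act k \<xi>) [0..<d]"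
  define \<alpha> where "\<alpha> = (\<lambda>i. act k \<xi> (d + i))"
  define \<beta> where "\<beta> = (\<lambda>i. act k \<eta> (d + i))"
  define q where "q = red (inv_word k @ P)"
  have k\<xi>: "reduced_inf (act k \<xi>)" and k\<eta>: "reduced_inf (act k \<eta>)"
    using reduced_inf_act \<xi> \<eta> by auto
  have split: "act k \<xi> = prepend P \<alpha>" "act k \<eta> = prepend P \<beta>"
    using d(1) by (auto simp: fun_eq_iff prepend_def P_def \<alpha>_def \<beta>_def)
  have \<alpha>: "reduced_inf \<alpha>" and \<beta>: "reduced_inf \<beta>"
    using k\<xi> k\<eta> by (auto simp: reduced_inf_def \<alpha>_def \<beta>_def)
  have "red (k @ q) = red P"
    using red_cancel_middle[of "[]" k P] by (simp add: q_def red_red_right)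
  also have "\<dots> = P"
    unfolding P_def by (rule red_reduced[OF reduced_map_prefix[OF k\<xi>]])
  finally have kq: "red (k @ q) = P" .
  have "reduced q"
    by (simp add: q_def)
  txt \<open>Since \<open>\<alpha> 0 \<noteq> \<beta> 0\<close>, at most one of \<open>\<alpha>\<close>, \<open>\<beta>\<close> cancels against the last letter of \<open>q\<close>.\<close>
  have "q = map \<xi> [0..<length q] \<or> q = map \<eta> [0..<length q]"
  proof (cases "q = [] \<or> \<alpha> 0 \<noteq> linv (last q)")
    case True
    then have "\<xi> = prepend q \<alpha>"
      using act_eq_prepend_imp[OF split(1) \<xi> \<alpha>] act_prepend reduced_inf_prepend[of q \<alpha>] \<alpha>
        \<open>reduced q\<close> by (auto simp: q_def)
    then show ?thesis
      using map_prepend by metis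
  next
    case False
    then have "q = [] \<or> \<beta> 0 \<noteq> linv (last q)"
      using d(2) by (auto simp: \<alpha>_def \<beta>_def)
    then have "\<eta> = prepend q \<beta>"
      using act_eq_prepend_imp[OF split(2) \<eta> \<beta>] act_prepend reduced_inf_prepend[of q \<beta>] \<beta>
        \<open>reduced q\<close> by (auto simp: q_def)
    then show ?thesis
      using map_prepend by metis
  qed
  then show ?thesis
    using kq unfolding P_def by (metis insertCI)
qed

lemma short_translate_of_prefix:
  assumes "reduced k" "reduced_inf \<xi>" "reduced_inf \<eta>"
    and "map (act k \<xi>) [0..<m] \<noteq> map (act k \<eta>) [0..<m]"
  shows "\<exists>\<zeta>\<in>{\<xi>, \<eta>}. \<exists>i. length (red (k @ map \<zeta> [0..<i])) \<le> m"
proof -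
  obtain i where i: "i < m" "act k \<xi> i \<noteq> act k \<eta> i"
    using assms(4) by (auto simp: map_eq_conv)
  define d where "d = (LEAST i. act k \<xi> i \<noteq> act k \<eta> i)"
  have "act k \<xi> d \<noteq> act k \<eta> d"
    unfolding d_def using i(2) by (rule LeastI)
  moreover have "\<forall>j<d. act k \<xi> j = act k \<eta> j"
    unfolding d_def using not_less_Least by blast
  ultimately obtain \<zeta> j where "\<zeta> \<in> {\<xi>, \<eta>}" "red (k @ map \<zeta> [0..<j]) = map (act k \<xi>) [0..<d]"
    using branch_point[OF assms(1-3)] by blast
  moreover have "d \<le> i"
    unfolding d_def using i(2) by (rule Least_le)
  ultimately show ?thesis
    using i(1) by (intro bexI[of _ \<zeta>] exI[of _ j]) auto
qed

section \<open>Quasiconvexity\<close>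

definition near :: "nat \<Rightarrow> letter list set \<Rightarrow> letter list \<Rightarrow> bool" where
  "near L Y p \<longleftrightarrow> (\<exists>v\<in>Y. length (red (inv_word p @ v)) \<le> L)"

definition quasiconvex :: "nat \<Rightarrow> letter list set \<Rightarrow> bool" where
  "quasiconvex L Y \<longleftrightarrow> (\<forall>h\<in>Y. \<forall>i. near L Y (take i h))"

lemma near_mono: "near L Y p \<Longrightarrow> L \<le> L' \<Longrightarrow> Y \<subseteq> Y' \<Longrightarrow> near L' Y' p"
  unfolding near_def by (meson le_trans subsetD)

lemma near_Nil: "near (length p) {[]} p"
  using length_red[of "inv_word p"] by (simp add: near_def)

lemma near_red_append:
  assumes "near L Y p"
  shows "near L ((\<lambda>v. red (x @ v)) ` Y) (red (x @ p))"
proof -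
  obtain v where v: "v \<in> Y" "length (red (inv_word p @ v)) \<le> L"
    using assms by (auto simp: near_def)
  have "red (inv_word (red (x @ p)) @ red (x @ v)) = red (inv_word p @ inv_word x @ x @ v)"
    by (simp add: red_inv_word_red red_red_right inv_word_append)
  also have "\<dots> = red (inv_word p @ v)"
    using red_cancel_middle'[of "inv_word p" x v] by simp
  finally have "length (red (inv_word (red (x @ p)) @ red (x @ v))) \<le> L"
    using v(2) by simp
  with v(1) show ?thesis
    unfolding near_def by (intro bexI[of _ "red (x @ v)"]) auto
qed

lemma take_red_append:
  assumes x: "reduced x" and y: "reduced y"
  shows "take i (red (x @ y)) = take i x \<or> (\<exists>j. take i (red (x @ y)) = red (x @ take j y))"
proof -
  obtain j where j: "drop (length x - j) x = inv_word (take j y)"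
     "red (x @ y) = take (length x - j) x @ drop j y"
    using red_append_cancellation[OF x y] by blast
  define A where "A = take (length x - j) x"
  have xA: "x = A @ inv_word (take j y)"
    using j(1) by (metis A_def append_take_drop_id)
  have xy: "red (x @ y) = A @ drop j y"
    using j(2) by (simp add: A_def)
  show ?thesis
  proof (cases "i \<le> length A")
    case True
    then show ?thesis
      using xy xA by simp
  next
    case False
    define B where "B = take (i - length A) (drop j y)"
    have "take i (red (x @ y)) = A @ B"
      using False xy by (simp add: B_def)
    moreover have "reduced (A @ B)"
      using reduced_take[OF reduced_red[of "x @ y"], of i] calculation by simp
    moreover have "red (x @ take (j + (i - length A)) y) = red (A @ B)"
      using red_cancel_middle'[of A "take j y" B] by (simp add: xA B_def take_add)
    ultimately show ?thesis
      by (metis red_reduced)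
  qed
qed

lemma quasiconvex_generate:
  assumes S: "S \<subseteq> carrier (FN N)" and L: "\<forall>s\<in>S. length s \<le> L"
  shows "quasiconvex L (generate (FN N) S)"
proof -
  interpret group "FN N" by (rule group_FN)
  let ?G = "generate (FN N) S"
  have one: "[] \<in> ?G"
    using generate.one[of "FN N" S] by (simp add: one_FN)
  have short: "near L ?G (take i h)" if "length h \<le> L" for h i
    using near_mono[OF near_Nil, of "take i h" L ?G] one that by auto
  have "near L ?G (take i h)" if "h \<in> ?G" for h i
    using that
  proof (induction h arbitrary: i rule: generate.induct)
    case one
    then show ?case
      using short[of "[]"] by (simp add: one_FN)
  next
    case (incl h)
    then show ?case
      using L by (intro short) simp
  next
    case (inv h)
    then show ?case
      using S L by (intro short) (auto simp: inv_FN)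
  next
    case (eng h1 h2)
    have "reduced h1" "reduced h2"
      using eng.hyps generate_incl[OF S] by (auto simp: carrier_FN)
    then consider "take i (h1 \<otimes>\<^bsub>FN N\<^esub> h2) = take i h1"
      | j where "take i (h1 \<otimes>\<^bsub>FN N\<^esub> h2) = red (h1 @ take j h2)"
      unfolding mult_FN using take_red_append by blast
    then show ?case
    proof cases
      case (2 j)
      have "(\<lambda>v. red (h1 @ v)) ` ?G \<subseteq> ?G"
        using generate.eng[OF eng.hyps(1)] by (auto simp: mult_FN)
      with 2 show ?thesis
        using near_mono[OF near_red_append[OF eng.IH(2)]] by simp
    qed (simp add: eng.IH(1))
  qed
  then show ?thesis
    by (simp add: quasiconvex_def)
qed

lemma near_take_red_append:
  assumes near: "\<And>i. near L Y (take i h)" and hY: "h \<in> Y"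
    and h: "reduced h" and t: "reduced t" "length t \<le> M"
  shows "near (L + M) Y (take i (red (h @ t)))"
  using take_red_append[OF h t(1), of i]
proof (elim disjE exE)
  assume "take i (red (h @ t)) = take i h"
  then show ?thesis
    using near_mono[OF near[of i]] by simp
next
  fix j assume j: "take i (red (h @ t)) = red (h @ take j t)"
  have "near (length (take j t)) {red (h @ [])} (red (h @ take j t))"
    using near_red_append[OF near_Nil, of "take j t" h] by simp
  then show ?thesis
    unfolding j using hY t(2) red_reduced[OF h] by (auto elim!: near_mono)
qed

text \<open>If \<open>H0 \<subseteq> H T\<close> with \<open>T\<close> a finite set of words, every prefix of a point of \<open>\<Lambda>(H0)\<close> is a
  prefix of some \<open>h t\<close>, hence close to \<open>H\<close>.\<close>

lemma near_LimSet_prefix: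
  assumes qc: "quasiconvex L H" and H: "H \<subseteq> carrier (FN N)"
    and cover: "\<forall>x\<in>H0. \<exists>t\<in>T. \<exists>h\<in>H. x = red (h @ t)"
    and T: "T \<subseteq> carrier (FN N)" "\<forall>t\<in>T. length t \<le> M"
    and \<xi>: "\<xi> \<in> LimSet N H0"
  shows "near (L + M) H (map \<xi> [0..<i])"
proof -
  obtain hs where hs: "\<forall>n. hs n \<in> H0" "\<forall>k. eventually (\<lambda>n. agrees (hs n) \<xi> k) sequentially"
    using \<xi> unfolding LimSet_iff by blast
  obtain n where "agrees (hs n) \<xi> i"
    using eventually_happens'[OF sequentially_bot hs(2)[rule_format, of i]] by blast
  then have prefix: "take i (hs n) = map \<xi> [0..<i]"
    by (simp add: agrees_iff_take)
  obtain t h where th: "t \<in> T" "h \<in> H" "hs n = red (h @ t)"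
    using cover hs(1) by blast
  have "near (L + M) H (take i (red (h @ t)))"
    using qc th H T by (intro near_take_red_append) (auto simp: quasiconvex_def carrier_FN)
  then show ?thesis
    using prefix th(3) by simp
qed

lemma short_conjugator:
  assumes H: "H \<subseteq> carrier (FN N)" and H0: "H0 \<subseteq> carrier (FN N)"
    and normal: "\<forall>v\<in>H. conjg (FN N) v H0 = H0"
    and k: "k \<in> carrier (FN N)" and q: "near D H q" "length (red (k @ q)) \<le> m"
  shows "\<exists>k'\<in>carrier (FN N). length k' \<le> m + D \<and> conjg (FN N) k' H0 = conjg (FN N) k H0"
proof -
  interpret group "FN N" by (rule group_FN)
  obtain v where v: "v \<in> H" "length (red (inv_word q @ v)) \<le> D"
    using q(1) by (auto simp: near_def)
  have "k \<otimes>\<^bsub>FN N\<^esub> v = red ((k @ q) @ (inv_word q @ v))"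
    using red_cancel_middle[of k q v] by (simp add: mult_FN)
  then have "length (k \<otimes>\<^bsub>FN N\<^esub> v) \<le> m + D"
    using length_red_append[of "k @ q" "inv_word q @ v"] q(2) v(2) by simp
  moreover have "conjg (FN N) (k \<otimes>\<^bsub>FN N\<^esub> v) H0 = conjg (FN N) k (conjg (FN N) v H0)"
    using k v H H0 by (intro conjg_mult) auto
  moreover have "conjg (FN N) v H0 = H0"
    using normal v(1) by blast
  ultimately show ?thesis
    using k v H by (intro bexI[of _ "k \<otimes>\<^bsub>FN N\<^esub> v"]) auto
qed

section \<open>Compact sets in the Vietoris topology\<close>

definition cyl :: "nat \<Rightarrow> letter list \<Rightarrow> (nat \<Rightarrow> letter) set" where
  "cyl N w = {\<xi> \<in> Bd N. map \<xi> [0..<length w] = w}"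

definition CN_sep :: "nat \<Rightarrow> nat \<Rightarrow> (nat \<Rightarrow> letter) set set" where
  "CN_sep N m = {C \<in> CN N. \<exists>x\<in>C. \<exists>y\<in>C. map x [0..<m] \<noteq> map y [0..<m]}"

lemma openin_prefix_set:
  "openin (product_topology (\<lambda>_. discrete_topology UNIV) UNIV) {\<xi>. \<forall>i<n. \<xi> i = w ! i}"
proof (induction n)
  case 0
  then show ?case
    using openin_topspace[of "product_topology (\<lambda>_. discrete_topology UNIV) UNIV"] by simp
next
  case (Suc n)
  have "openin (product_topology (\<lambda>_. discrete_topology UNIV) UNIV) {\<xi>. \<xi> n = w ! n}"
    using openin_continuous_map_preimage[OF continuous_map_product_projection, of n UNIV
        "\<lambda>_. discrete_topology UNIV" "{w ! n}"] by simp
  moreover have "{\<xi>. \<forall>i<Suc n. \<xi> i = w ! i} = {\<xi>. \<forall>i<n. \<xi> i = w ! i} \<inter> {\<xi>. \<xi> n = w ! n}"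
    by (auto simp: less_Suc_eq)
  ultimately show ?case
    using Suc by (simp add: openin_Int)
qed

lemma openin_cyl: "openin (BdTop N) (cyl N w)"
proof -
  have "map \<xi> [0..<length w] = w \<longleftrightarrow> (\<forall>i<length w. \<xi> i = w ! i)" for \<xi>
  proof
    assume "map \<xi> [0..<length w] = w"
    then show "\<forall>i<length w. \<xi> i = w ! i"
      by (metis add_0 diff_zero nth_map_upt)
  qed (intro nth_equalityI; simp)
  then have "cyl N w = Bd N \<inter> {\<xi>. \<forall>i<length w. \<xi> i = w ! i}"
    unfolding cyl_def by blast
  then show ?thesis
    unfolding BdTop_def by (simp only: openin_subtopology_Int2[OF openin_prefix_set])
qed

lemma CN_subset_Bd: "C \<in> CN N \<Longrightarrow> C \<subseteq> Bd N"
  using closedin_subset[of "BdTop N" C] by (simp add: CN_def BdTop_def)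

lemma topspace_Vietoris: "topspace (Vietoris N) \<subseteq> CN N"
  by (simp add: Vietoris_def)

lemma CN_sep_eq_Int_Union:
  "CN_sep N m = CN N \<inter> \<Union>{{C. C \<inter> cyl N w \<noteq> {}} \<inter> {C. C \<inter> cyl N w' \<noteq> {}} | w w'.
     length w = m \<and> length w' = m \<and> w \<noteq> w'}" (is "_ = CN N \<inter> ?V")
proof (intro equalityI subsetI)
  fix C assume "C \<in> CN_sep N m"
  then obtain x y where xy: "x \<in> C" "y \<in> C" "map x [0..<m] \<noteq> map y [0..<m]" and C: "C \<in> CN N"
    by (auto simp: CN_sep_def)
  then have in_cyls: "C \<in> {C. C \<inter> cyl N (map x [0..<m]) \<noteq> {}} \<inter> {C. C \<inter> cyl N (map y [0..<m]) \<noteq> {}}"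
    using CN_subset_Bd by (auto simp: cyl_def)
  have "{C. C \<inter> cyl N (map x [0..<m]) \<noteq> {}} \<inter> {C. C \<inter> cyl N (map y [0..<m]) \<noteq> {}} \<in>
    {{C. C \<inter> cyl N w \<noteq> {}} \<inter> {C. C \<inter> cyl N w' \<noteq> {}} | w w'. length w = m \<and> length w' = m \<and> w \<noteq> w'}"
    using xy(3) by (intro CollectI exI[of _ "map x [0..<m]"] exI[of _ "map y [0..<m]"]) simp
  then have "C \<in> ?V"
    using in_cyls by (rule UnionI)
  then show "C \<in> CN N \<inter> ?V"
    using C by blast
next
  fix C assume "C \<in> CN N \<inter> ?V"
  then obtain w w' where C: "C \<in> CN N" and ww: "length w = m" "length w' = m" "w \<noteq> w'"
    "C \<inter> cyl N w \<noteq> {}" "C \<inter> cyl N w' \<noteq> {}"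
    by auto
  then obtain x y where "x \<in> C" "y \<in> C" "map x [0..<m] = w" "map y [0..<m] = w'"
    by (auto simp: cyl_def)
  moreover from this have "map x [0..<m] \<noteq> map y [0..<m]"
    using ww(3) by simp
  ultimately show "C \<in> CN_sep N m"
    unfolding CN_sep_def using C by blast
qed

lemma openin_CN_sep: "openin (Vietoris N) (CN_sep N m)"
proof -
  define Gen where "Gen = {{C. C \<subseteq> U} | U. openin (BdTop N) U} \<union> {{C. C \<inter> U \<noteq> {}} | U. openin (BdTop N) U}"
  have basic: "generate_topology_on Gen {C. C \<inter> cyl N w \<noteq> {}}" for w
    by (rule generate_topology_on.Basis) (auto simp: Gen_def intro!: openin_cyl)
  have "generate_topology_on Gen (\<Union>{{C. C \<inter> cyl N w \<noteq> {}} \<inter> {C. C \<inter> cyl N w' \<noteq> {}} | w w'.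
     length w = m \<and> length w' = m \<and> w \<noteq> w'})"
    by (rule generate_topology_on.UN) (auto intro!: generate_topology_on.Int basic)
  then show ?thesis
    unfolding Vietoris_def Gen_def[symmetric] CN_sep_eq_Int_Union
    by (simp add: openin_subtopology_Int2 openin_topology_generated_by_iff)
qed

lemma CN_sep_mono:
  assumes "m \<le> m'"
  shows "CN_sep N m \<subseteq> CN_sep N m'"
proof
  fix C assume "C \<in> CN_sep N m"
  then obtain x y where xy: "x \<in> C" "y \<in> C" "map x [0..<m] \<noteq> map y [0..<m]" and "C \<in> CN N"
    by (auto simp: CN_sep_def)
  have "map f [0..<m] = take m (map f [0..<m'])" for f :: "nat \<Rightarrow> letter"
    using assms by (simp add: take_map min_def)
  then have "map x [0..<m'] \<noteq> map y [0..<m']"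
    using xy(3) by (metis (no_types))
  with xy \<open>C \<in> CN N\<close> show "C \<in> CN_sep N m'"
    unfolding CN_sep_def by blast
qed

lemma CN_eq_Union_CN_sep: "CN N = (\<Union>m. CN_sep N m)"
proof (intro equalityI subsetI)
  fix C assume C: "C \<in> CN N"
  then obtain x y i where xy: "x \<in> C" "y \<in> C" "x i \<noteq> y i"
    by (auto simp: CN_def fun_eq_iff)
  then have "map x [0..<Suc i] \<noteq> map y [0..<Suc i]"
    by auto
  then have "C \<in> CN_sep N (Suc i)"
    using C xy unfolding CN_sep_def by blast
  then show "C \<in> (\<Union>m. CN_sep N m)"
    by blast
qed (auto simp: CN_sep_def)

lemma compactin_subset_CN_sep:
  assumes K: "compactin (Vietoris N) K"
  obtains m where "K \<subseteq> CN_sep N m"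
proof -
  have cover: "K \<subseteq> \<Union>(range (CN_sep N))"
    using compactin_subset_topspace[OF K] topspace_Vietoris CN_eq_Union_CN_sep by blast
  have open_cover: "\<forall>U\<in>range (CN_sep N). openin (Vietoris N) U"
    using openin_CN_sep by blast
  have compact: "\<forall>\<U>. (\<forall>U\<in>\<U>. openin (Vietoris N) U) \<and> K \<subseteq> \<Union>\<U>
      \<longrightarrow> (\<exists>\<F>. finite \<F> \<and> \<F> \<subseteq> \<U> \<and> K \<subseteq> \<Union>\<F>)"
    using K unfolding compactin_def by blast
  obtain \<F> where "finite \<F>" "\<F> \<subseteq> range (CN_sep N)" "K \<subseteq> \<Union>\<F>"
    using compact[rule_format, OF conjI[OF open_cover cover]] by blast
  then obtain F where F: "finite F" "K \<subseteq> (\<Union>m\<in>F. CN_sep N m)"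
    by (metis finite_subset_image subset_UNIV)
  have "CN_sep N m \<subseteq> CN_sep N (Max (insert 0 F))" if "m \<in> F" for m
    using F(1) that by (intro CN_sep_mono) simp
  then have "(\<Union>m\<in>F. CN_sep N m) \<subseteq> CN_sep N (Max (insert 0 F))"
    by (rule UN_least)
  with F(2) show ?thesis
    by (intro that) (rule subset_trans)
qed

section \<open>The current \<open>\<eta>\<^sub>H\<close>\<close>

lemma open_Vietoris_subset_Pow_CN: "{U. openin (Vietoris N) U} \<subseteq> Pow (CN N)"
  using openin_subset[of "Vietoris N"] topspace_Vietoris by blast

lemma BorelV_subset_CN: "A \<in> BorelV N \<Longrightarrow> A \<subseteq> CN N"
  unfolding BorelV_def by (rule sigma_sets_into_sp[OF open_Vietoris_subset_Pow_CN])

lemma measure_space_eta: "measure_space (CN N) (BorelV N) (eta N H)"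
  unfolding measure_space_def
proof (intro conjI)
  show "sigma_algebra (CN N) (BorelV N)"
    unfolding BorelV_def by (rule sigma_algebra_sigma_sets[OF open_Vietoris_subset_Pow_CN])
  show "positive (BorelV N) (eta N H)"
    by (simp add: positive_def eta_def Let_def)
  show "countably_additive (BorelV N) (eta N H)"
    unfolding countably_additive_def
  proof (intro allI impI)
    fix A :: "nat \<Rightarrow> (nat \<Rightarrow> letter) set set"
    assume "disjoint_family A"
    define CC where "CC = conjclass (FN N) (Comm (FN N) H)"
    define c :: ennreal where "c = of_nat (card (cosets_in (FN N) H (Comm (FN N) H)))"
    have eta: "eta N H B = c * emeasure (count_space CC) {Z \<in> CC. LimSet N Z \<in> B}" for B
      by (simp add: eta_def Let_def CC_def c_def)
    have "disjoint_family (\<lambda>i. {Z \<in> CC. LimSet N Z \<in> A i})"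
      using \<open>disjoint_family A\<close> unfolding disjoint_family_on_def by blast
    then have "suminf (\<lambda>i. emeasure (count_space CC) {Z \<in> CC. LimSet N Z \<in> A i})
        = emeasure (count_space CC) (\<Union>i. {Z \<in> CC. LimSet N Z \<in> A i})"
      by (intro suminf_emeasure) auto
    moreover have "(\<Union>i. {Z \<in> CC. LimSet N Z \<in> A i}) = {Z \<in> CC. LimSet N Z \<in> \<Union>(range A)}"
      by auto
    ultimately show "suminf (\<lambda>i. eta N H (A i)) = eta N H (\<Union>(range A))"
      unfolding eta by (simp add: ennreal_suminf_cmult)
  qed
qed

lemma emeasure_count_space_inj_image:
  assumes "inj_on f A" "A \<subseteq> B" "f ` A \<subseteq> B"
  shows "emeasure (count_space B) (f ` A) = emeasure (count_space B) A"
  using assms by (cases "finite A") (simp_all add: card_image finite_image_iff)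

lemma conjclass_LimSet_act:
  assumes g: "g \<in> carrier (FN N)" and Y: "Y \<subseteq> carrier (FN N)" and A: "A \<subseteq> CN N"
  shows "{Z \<in> conjclass (FN N) Y. LimSet N Z \<in> (\<lambda>C. act g ` C) ` A}
    = conjg (FN N) g ` {Z \<in> conjclass (FN N) Y. LimSet N Z \<in> A}"
proof -
  interpret group "FN N" by (rule group_FN)
  have sub: "Z \<subseteq> carrier (FN N)" if "Z \<in> conjclass (FN N) Y" for Z
    using Y that by (rule conjclass_subset)
  show ?thesis
  proof (intro equalityI subsetI)
    fix Z assume "Z \<in> {Z \<in> conjclass (FN N) Y. LimSet N Z \<in> (\<lambda>C. act g ` C) ` A}"
    then obtain C where Z: "Z \<in> conjclass (FN N) Y" and C: "C \<in> A" "LimSet N Z = act g ` C"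
      by blast
    define Z' where "Z' = conjg (FN N) (inv\<^bsub>FN N\<^esub> g) Z"
    have "Z' \<in> conjclass (FN N) Y"
      unfolding Z'_def using g Y Z by (intro conjg_in_conjclass) auto
    moreover have "LimSet N Z' = C"
      using LimSet_conjg[OF inv_word_in_carrier_FN[OF g] sub[OF Z]] C(2)
        image_act_inv_word_act[OF CN_subset_Bd, of C N g] C(1) A
      by (auto simp: Z'_def inv_FN[OF g])
    moreover have "Z = conjg (FN N) g Z'"
      unfolding Z'_def using g sub[OF Z] by (simp add: conjg_conjg_inv)
    ultimately show "Z \<in> conjg (FN N) g ` {Z \<in> conjclass (FN N) Y. LimSet N Z \<in> A}"
      using C(1) by blast
  next
    fix Z assume "Z \<in> conjg (FN N) g ` {Z \<in> conjclass (FN N) Y. LimSet N Z \<in> A}"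
    then obtain Z' where "Z = conjg (FN N) g Z'" "Z' \<in> conjclass (FN N) Y" "LimSet N Z' \<in> A"
      by blast
    then show "Z \<in> {Z \<in> conjclass (FN N) Y. LimSet N Z \<in> (\<lambda>C. act g ` C) ` A}"
      using g Y LimSet_conjg[OF g sub] by (auto intro: conjg_in_conjclass)
  qed
qed

lemma eta_act_invariant:
  assumes g: "g \<in> carrier (FN N)" and A: "A \<subseteq> CN N"
  shows "eta N H ((\<lambda>C. act g ` C) ` A) = eta N H A"
proof -
  interpret group "FN N" by (rule group_FN)
  define CC where "CC = conjclass (FN N) (Comm (FN N) H)"
  have sub: "Z \<subseteq> carrier (FN N)" if "Z \<in> CC" for Z
    using Comm_subset that unfolding CC_def by (rule conjclass_subset)
  have "inj_on (conjg (FN N) g) CC"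
    by (rule inj_on_inverseI[of _ "conjg (FN N) (inv\<^bsub>FN N\<^esub> g)"]) (simp add: g sub conjg_inv_conjg)
  then have "emeasure (count_space CC) (conjg (FN N) g ` {Z \<in> CC. LimSet N Z \<in> A})
      = emeasure (count_space CC) {Z \<in> CC. LimSet N Z \<in> A}"
    using g Comm_subset unfolding CC_def
    by (intro emeasure_count_space_inj_image) (auto intro: inj_on_subset conjg_in_conjclass)
  then show ?thesis
    using conjclass_LimSet_act[OF g Comm_subset A] by (simp add: eta_def Let_def CC_def)
qed

lemma LimSet_conjg_CN_sep_short_prefix:
  assumes k: "k \<in> carrier (FN N)" and Y: "Y \<subseteq> carrier (FN N)"
    and sep: "LimSet N (conjg (FN N) k Y) \<in> CN_sep N m"
  shows "\<exists>\<zeta>\<in>LimSet N Y. \<exists>i. length (red (k @ map \<zeta> [0..<i])) \<le> m"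
proof -
  have "act k ` LimSet N Y \<in> CN_sep N m"
    using sep LimSet_conjg[OF k Y] by simp
  then obtain \<xi> \<eta> where \<xi>\<eta>: "\<xi> \<in> LimSet N Y" "\<eta> \<in> LimSet N Y"
    "map (act k \<xi>) [0..<m] \<noteq> map (act k \<eta>) [0..<m]"
    unfolding CN_sep_def by blast
  moreover have "reduced_inf \<xi>" "reduced_inf \<eta>"
    using \<xi>\<eta>(1,2) LimSet_subset_Bd[of N Y] by (auto simp: Bd_iff)
  moreover have "reduced k"
    using k by (simp add: carrier_FN)
  ultimately show ?thesis
    using short_translate_of_prefix[of k \<xi> \<eta> m] by blast
qed

text \<open>A conjugate \<open>k H\<^sub>0 k\<^sup>-\<^sup>1\<close> whose limit set lies in \<open>CN_sep N m\<close> is already a conjugate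
  by a word of length at most \<open>m + L + M\<close>, where \<open>L\<close> (quasiconvexity of \<open>H\<close>) and \<open>M\<close> (length of
  coset representatives of \<open>H\<close> in \<open>H\<^sub>0\<close>) do not depend on \<open>k\<close>.\<close>

lemma finite_conjclass_Comm_LimSet_CN_sep:
  assumes H: "subgroup H (FN N)" and S: "finite S" "S \<subseteq> carrier (FN N)" "H = generate (FN N) S"
    and index: "finite (cosets_in (FN N) H (Comm (FN N) H))"
  shows "finite {Z \<in> conjclass (FN N) (Comm (FN N) H). LimSet N Z \<in> CN_sep N m}"
proof -
  interpret group "FN N" by (rule group_FN)
  define H0 where "H0 = Comm (FN N) H"
  have H0: "H0 \<subseteq> carrier (FN N)" and Hc: "H \<subseteq> carrier (FN N)"
    using Comm_subset H by (auto simp: H0_def subgroup.subset)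
  define L where "L = Max (insert 0 (length ` S))"
  have qc: "quasiconvex L H"
    unfolding S(3) L_def using S(1,2) by (intro quasiconvex_generate) auto
  obtain T where T: "finite T" "T \<subseteq> H0" "\<And>x. x \<in> H0 \<Longrightarrow> \<exists>t\<in>T. \<exists>h\<in>H. x = h \<otimes>\<^bsub>FN N\<^esub> t"
    using finite_cosets_in_representatives[OF H H0] index unfolding H0_def by blast
  define M where "M = Max (insert 0 (length ` T))"
  have TM: "\<forall>t\<in>T. length t \<le> M"
    using T(1) by (auto simp: M_def)
  have cover: "\<forall>x\<in>H0. \<exists>t\<in>T. \<exists>h\<in>H. x = red (h @ t)"
    using T(3) by (simp add: mult_FN)
  have normal: "\<forall>v\<in>H. conjg (FN N) v H0 = H0"
    unfolding H0_def using conjg_Comm[OF H] by blast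
  have "{Z \<in> conjclass (FN N) H0. LimSet N Z \<in> CN_sep N m}
      \<subseteq> (\<lambda>k. conjg (FN N) k H0) ` {w \<in> carrier (FN N). length w \<le> m + (L + M)}"
  proof
    fix Z assume "Z \<in> {Z \<in> conjclass (FN N) H0. LimSet N Z \<in> CN_sep N m}"
    then obtain k where k: "k \<in> carrier (FN N)" "Z = conjg (FN N) k H0" "LimSet N Z \<in> CN_sep N m"
      by (auto simp: conjclass_def)
    then obtain \<zeta> i where \<zeta>: "\<zeta> \<in> LimSet N H0" "length (red (k @ map \<zeta> [0..<i])) \<le> m"
      using LimSet_conjg_CN_sep_short_prefix[OF k(1) H0] by blast
    have "near (L + M) H (map \<zeta> [0..<i])"
      using qc Hc cover T(2) H0 TM \<zeta>(1) by (intro near_LimSet_prefix) auto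
    then obtain k' where "k' \<in> carrier (FN N)" "length k' \<le> m + (L + M)" "conjg (FN N) k' H0 = Z"
      using short_conjugator[OF Hc H0 normal k(1) _ \<zeta>(2)] k(2) by blast
    then show "Z \<in> (\<lambda>k. conjg (FN N) k H0) ` {w \<in> carrier (FN N). length w \<le> m + (L + M)}"
      by blast
  qed
  then show ?thesis
    unfolding H0_def by (rule finite_subset) (rule finite_imageI[OF finite_FN_ball])
qed

lemma eta_compact_finite:
  assumes H: "subgroup H (FN N)" and S: "\<exists>S. finite S \<and> S \<subseteq> carrier (FN N) \<and> H = generate (FN N) S"
    and K: "compactin (Vietoris N) K"
  shows "eta N H K < \<infinity>"
proof (cases "finite (cosets_in (FN N) H (Comm (FN N) H))")
  case True
  obtain m where "K \<subseteq> CN_sep N m"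
    using K by (rule compactin_subset_CN_sep)
  then have "finite {Z \<in> conjclass (FN N) (Comm (FN N) H). LimSet N Z \<in> K}"
    using finite_conjclass_Comm_LimSet_CN_sep[OF H _ _ _ True, of _ m] S
    by (blast intro: rev_finite_subset)
  then show ?thesis
    by (simp add: eta_def Let_def ennreal_mult_less_top of_nat_less_top)
qed (simp add: eta_def)

theorem lemma4p4:
  fixes N :: nat and H :: "letter list set"
  assumes "subgroup H (FN N)"
    and "H \<noteq> {\<one>\<^bsub>FN N\<^esub>}"
    and "\<exists>S. finite S \<and> S \<subseteq> carrier (FN N) \<and> H = generate (FN N) S"
  shows "SCurr N (eta N H)"
  unfolding SCurr_def
  using measure_space_eta eta_act_invariant[OF _ BorelV_subset_CN] eta_compact_finite[OF assms(1,3)]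
  by blast

end
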